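(* Let $X$ be a compact metric space and $(f_n)_{n\ge1}$ a sequence of continuous maps $X\to X$. Then for all $p,q\in\mathbb{N}^*$ and all $x\in X$, $$f_1^{p+q}(x)=q\text{-}\lim_{n\to\infty}f_1^{p+n}(x).$$
   Context: $\mathbb{N}=\{1,2,\dots\}$, $\beta(\mathbb{N})$ the ultrafilters on $\mathbb{N}$, $\mathbb{N}^*$ the free ones. For $r\in\mathbb{N}^*$, $r\text{-}\lim_n x_n$ is the unique $y$ with $\{n:x_n\in V\}\in r$ for all neighbourhoods $V$ of $y$. $f_1^n=f_n\circ\cdots\circ f_1$ and $f_1^r(x)=r\text{-}\lim_n f_1^n(x)$ for $r\in\mathbb{N}^*$. Addition: $p+n=\{A:\{m:m+n\in A\}\in p\}$ and $p+q=\{A:\{n:\{m:m+n\in A\}\in p\}\in q\}$; for $p\in\mathbb{N}^*$ these are free ultrafilters. *)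

theory Defs
  imports "HOL-Analysis.Analysis"
begin

definition ultrafilter_nat :: "nat set set \<Rightarrow> bool" where
  "ultrafilter_nat U \<longleftrightarrow>
     UNIV \<in> U \<and> {} \<notin> U \<and>
     (\<forall>A B. A \<in> U \<and> A \<subseteq> B \<longrightarrow> B \<in> U) \<and>
     (\<forall>A B. A \<in> U \<and> B \<in> U \<longrightarrow> A \<inter> B \<in> U) \<and>
     (\<forall>A. A \<in> U \<or> - A \<in> U)"

definition free_ultrafilter_nat :: "nat set set \<Rightarrow> bool" where
  "free_ultrafilter_nat U \<longleftrightarrow> ultrafilter_nat U \<and> \<Inter> U = {}"

definition ulim :: "nat set set \<Rightarrow> (nat \<Rightarrow> 'a::topological_space) \<Rightarrow> 'a" where
  "ulim r s = (THE y. \<forall>V. open V \<and> y \<in> V \<longrightarrow> {n. s n \<in> V} \<in> r)"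

definition uplus_nat :: "nat set set \<Rightarrow> nat \<Rightarrow> nat set set" where
  "uplus_nat p n = {A. {m. m + n \<in> A} \<in> p}"

definition uplus :: "nat set set \<Rightarrow> nat set set \<Rightarrow> nat set set" where
  "uplus p q = {A. {n. {m. m + n \<in> A} \<in> p} \<in> q}"

fun fcomp_seq :: "(nat \<Rightarrow> 'a \<Rightarrow> 'a) \<Rightarrow> nat \<Rightarrow> 'a \<Rightarrow> 'a" where
  "fcomp_seq f 0 = id"
| "fcomp_seq f (Suc n) = f (Suc n) \<circ> fcomp_seq f n"

definition fcomp_ulim :: "(nat \<Rightarrow> 'a \<Rightarrow> 'a) \<Rightarrow> nat set set \<Rightarrow> 'a \<Rightarrow> 'a::topological_space" where
  "fcomp_ulim f r x = ulim r (\<lambda>n. fcomp_seq f n x)"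

end

theory Submission
  imports Defs
begin

text \<open>For an ultrafilter \<open>r\<close> and a sequence in a compact Hausdorff set, the \<open>r\<close>-limit exists
  (a finite subcover would split \<open>UNIV \<in> r\<close> into finitely many sets none of which is in \<open>r\<close>)
  and is unique. The identity \<open>(p+q)-lim s = q-lim\<^sub>n (p+n)-lim s\<close> then holds for every such
  sequence, because the \<open>q\<close>-limit \<open>z\<close> of the points \<open>(p+n)-lim s\<close> already satisfies the defining
  property of the \<open>(p+q)\<close>-limit: for a neighbourhood \<open>V\<close> of \<open>z\<close>, \<open>q\<close>-many \<open>n\<close> have
  \<open>(p+n)-lim s \<in> V\<close>, i.e. \<open>{k. s k \<in> V} \<in> p+n\<close>, which is membership in \<open>p+q\<close>.\<close>

definition is_ulim :: "nat set set \<Rightarrow> (nat \<Rightarrow> 'a::topological_space) \<Rightarrow> 'a \<Rightarrow> bool" where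
  "is_ulim r s y \<longleftrightarrow> (\<forall>V. open V \<and> y \<in> V \<longrightarrow> {n. s n \<in> V} \<in> r)"

lemma ulim_def': "ulim r s = (THE y. is_ulim r s y)"
  unfolding ulim_def is_ulim_def ..

lemma ultrafilter_nat_UNIV: "ultrafilter_nat r \<Longrightarrow> UNIV \<in> r"
  and ultrafilter_nat_empty: "ultrafilter_nat r \<Longrightarrow> {} \<notin> r"
  and ultrafilter_nat_mono: "ultrafilter_nat r \<Longrightarrow> A \<in> r \<Longrightarrow> A \<subseteq> B \<Longrightarrow> B \<in> r"
  and ultrafilter_nat_Int: "ultrafilter_nat r \<Longrightarrow> A \<in> r \<Longrightarrow> B \<in> r \<Longrightarrow> A \<inter> B \<in> r"
  unfolding ultrafilter_nat_def by blast+

lemma ultrafilter_nat_Compl_iff: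
  assumes r: "ultrafilter_nat r"
  shows "- A \<in> r \<longleftrightarrow> A \<notin> r"
proof
  show "A \<notin> r" if "- A \<in> r"
    using that ultrafilter_nat_Int[OF r, of A "- A"] ultrafilter_nat_empty[OF r] by auto
  show "- A \<in> r" if "A \<notin> r"
    using that r unfolding ultrafilter_nat_def by blast
qed

lemma ultrafilter_nat_finite_UN:
  assumes r: "ultrafilter_nat r" and "finite F" and "(\<Union>y\<in>F. G y) \<in> r"
  shows "\<exists>y\<in>F. G y \<in> r"
  using \<open>finite F\<close> \<open>(\<Union>y\<in>F. G y) \<in> r\<close>
proof (induction F rule: finite_induct)
  case empty
  then show ?case using ultrafilter_nat_empty[OF r] by simp
next
  case (insert a F)
  show ?case
  proof (cases "G a \<in> r")
    case False
    then have "(\<Union>y\<in>insert a F. G y) \<inter> - G a \<in> r"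
      using insert.prems ultrafilter_nat_Int[OF r] ultrafilter_nat_Compl_iff[OF r] by blast
    then have "(\<Union>y\<in>F. G y) \<in> r" by (rule ultrafilter_nat_mono[OF r]) blast
    then show ?thesis using insert.IH by blast
  qed simp
qed

lemma is_ulim_unique:
  fixes s :: "nat \<Rightarrow> 'a::t2_space"
  assumes r: "ultrafilter_nat r" and "is_ulim r s y" and "is_ulim r s z"
  shows "y = z"
proof (rule ccontr)
  assume "y \<noteq> z"
  then obtain U W where "open U" "open W" "y \<in> U" "z \<in> W" "U \<inter> W = {}"
    by (metis hausdorff)
  then have "{n. s n \<in> U} \<in> r" and "{n. s n \<in> W} \<in> r"
    using assms(2,3) unfolding is_ulim_def by blast+
  then have "{n. s n \<in> U} \<inter> {n. s n \<in> W} \<in> r"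
    by (rule ultrafilter_nat_Int[OF r])
  moreover have "{n. s n \<in> U} \<inter> {n. s n \<in> W} = {}" using \<open>U \<inter> W = {}\<close> by blast
  ultimately show False using ultrafilter_nat_empty[OF r] by simp
qed

lemma is_ulim_exists:
  assumes r: "ultrafilter_nat r" and X: "compact X" and sX: "\<And>n. s n \<in> X"
  shows "\<exists>y\<in>X. is_ulim r s y"
proof (rule ccontr)
  assume "\<not> ?thesis"
  then have "\<forall>y\<in>X. \<exists>V. open V \<and> y \<in> V \<and> {n. s n \<in> V} \<notin> r"
    unfolding is_ulim_def by blast
  then obtain V where V: "\<And>y. y \<in> X \<Longrightarrow> open (V y) \<and> y \<in> V y \<and> {n. s n \<in> V y} \<notin> r"
    by metis
  have "X \<subseteq> \<Union>(V ` X)" using V by blast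
  then obtain F where F: "F \<subseteq> X" "finite F" "X \<subseteq> \<Union>(V ` F)"
    using compactE_image[OF X, of X V] V by blast
  have "(\<Union>y\<in>F. {n. s n \<in> V y}) = UNIV" using F(3) sX by blast
  then have "(\<Union>y\<in>F. {n. s n \<in> V y}) \<in> r" using ultrafilter_nat_UNIV[OF r] by simp
  then obtain y where "y \<in> F" "{n. s n \<in> V y} \<in> r"
    by (rule ultrafilter_nat_finite_UN[OF r F(2), THEN bexE])
  then show False using V F(1) by blast
qed

lemma ulim_eqI:
  fixes s :: "nat \<Rightarrow> 'a::t2_space"
  assumes "ultrafilter_nat r" and "is_ulim r s y"
  shows "ulim r s = y"
  unfolding ulim_def'
proof (rule the_equality)
  show "is_ulim r s y" by fact
  show "z = y" if "is_ulim r s z" for z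
    using is_ulim_unique[OF assms(1) that assms(2)] .
qed

lemma ulim_in_is_ulim:
  fixes s :: "nat \<Rightarrow> 'a::t2_space"
  assumes "ultrafilter_nat r" and "compact X" and "\<And>n. s n \<in> X"
  shows "ulim r s \<in> X" and "is_ulim r s (ulim r s)"
proof -
  have "\<exists>y\<in>X. is_ulim r s y" by (rule is_ulim_exists[OF assms(1,2)]) (rule assms(3))
  then obtain y where "y \<in> X" and "is_ulim r s y" by blast
  moreover have "ulim r s = y" using assms(1) \<open>is_ulim r s y\<close> by (rule ulim_eqI)
  ultimately show "ulim r s \<in> X" and "is_ulim r s (ulim r s)" by simp_all
qed

lemma ultrafilter_nat_uplus_nat:
  assumes p: "ultrafilter_nat p"
  shows "ultrafilter_nat (uplus_nat p n)"
  unfolding ultrafilter_nat_def uplus_nat_def mem_Collect_eq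
proof (intro conjI allI impI)
  show "{m. m + n \<in> UNIV} \<in> p" using ultrafilter_nat_UNIV[OF p] by simp
  show "{m. m + n \<in> {}} \<notin> p" using ultrafilter_nat_empty[OF p] by simp
  fix A B
  show "{m. m + n \<in> B} \<in> p" if "{m. m + n \<in> A} \<in> p \<and> A \<subseteq> B"
  proof (rule ultrafilter_nat_mono[OF p])
    show "{m. m + n \<in> A} \<in> p" using that by simp
  qed (use that in blast)
  have "{m. m + n \<in> A \<inter> B} = {m. m + n \<in> A} \<inter> {m. m + n \<in> B}" by auto
  then show "{m. m + n \<in> A \<inter> B} \<in> p" if "{m. m + n \<in> A} \<in> p \<and> {m. m + n \<in> B} \<in> p"
    using that ultrafilter_nat_Int[OF p] by simp
next
  fix A
  have "{m. m + n \<in> - A} = - {m. m + n \<in> A}" by auto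
  then show "{m. m + n \<in> A} \<in> p \<or> {m. m + n \<in> - A} \<in> p"
    using ultrafilter_nat_Compl_iff[OF p] by simp
qed

lemma uplus_eq_uplus_nat: "uplus p q = {A. {n. A \<in> uplus_nat p n} \<in> q}"
  unfolding uplus_def uplus_nat_def by simp

lemma ultrafilter_nat_uplus:
  assumes p: "ultrafilter_nat p" and q: "ultrafilter_nat q"
  shows "ultrafilter_nat (uplus p q)"
  unfolding ultrafilter_nat_def uplus_eq_uplus_nat mem_Collect_eq
proof (intro conjI allI impI)
  note pn = ultrafilter_nat_uplus_nat[OF p]
  show "{n. UNIV \<in> uplus_nat p n} \<in> q"
    using ultrafilter_nat_UNIV[OF pn] ultrafilter_nat_UNIV[OF q] by simp
  show "{n. {} \<in> uplus_nat p n} \<notin> q"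
    using ultrafilter_nat_empty[OF pn] ultrafilter_nat_empty[OF q] by simp
  fix A B
  show "{n. B \<in> uplus_nat p n} \<in> q" if "{n. A \<in> uplus_nat p n} \<in> q \<and> A \<subseteq> B"
  proof (rule ultrafilter_nat_mono[OF q])
    have "A \<in> uplus_nat p n \<Longrightarrow> B \<in> uplus_nat p n" for n
      using ultrafilter_nat_mono[OF pn, where A = A and B = B] that by simp
    then show "{n. A \<in> uplus_nat p n} \<subseteq> {n. B \<in> uplus_nat p n}" by blast
  qed (use that in simp)
  show "{n. A \<inter> B \<in> uplus_nat p n} \<in> q"
    if "{n. A \<in> uplus_nat p n} \<in> q \<and> {n. B \<in> uplus_nat p n} \<in> q"
  proof (rule ultrafilter_nat_mono[OF q])
    show "{n. A \<in> uplus_nat p n} \<inter> {n. B \<in> uplus_nat p n} \<in> q"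
      using that ultrafilter_nat_Int[OF q] by simp
    have "A \<in> uplus_nat p n \<Longrightarrow> B \<in> uplus_nat p n \<Longrightarrow> A \<inter> B \<in> uplus_nat p n" for n
      by (rule ultrafilter_nat_Int[OF pn])
    then show "{n. A \<in> uplus_nat p n} \<inter> {n. B \<in> uplus_nat p n}
        \<subseteq> {n. A \<inter> B \<in> uplus_nat p n}" by blast
  qed
next
  fix A
  have "- A \<in> uplus_nat p n \<longleftrightarrow> A \<notin> uplus_nat p n" for n
    by (rule ultrafilter_nat_Compl_iff[OF ultrafilter_nat_uplus_nat[OF p]])
  then have "{n. - A \<in> uplus_nat p n} = - {n. A \<in> uplus_nat p n}" by blast
  then show "{n. A \<in> uplus_nat p n} \<in> q \<or> {n. - A \<in> uplus_nat p n} \<in> q"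
    using ultrafilter_nat_Compl_iff[OF q] by simp
qed

lemma is_ulim_uplus:
  assumes "\<And>n. is_ulim (uplus_nat p n) s (y n)" and "is_ulim q y z" and q: "ultrafilter_nat q"
  shows "is_ulim (uplus p q) s z"
  unfolding is_ulim_def uplus_eq_uplus_nat mem_Collect_eq
proof (intro allI impI)
  fix V assume "open V \<and> z \<in> V"
  then have "{n. y n \<in> V} \<in> q" using assms(2) unfolding is_ulim_def by blast
  moreover have "{n. y n \<in> V} \<subseteq> {n. {k. s k \<in> V} \<in> uplus_nat p n}"
    using assms(1) \<open>open V \<and> z \<in> V\<close> unfolding is_ulim_def by blast
  ultimately show "{n. {k. s k \<in> V} \<in> uplus_nat p n} \<in> q"
    by (rule ultrafilter_nat_mono[OF q])
qed

lemma ulim_uplus: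
  fixes s :: "nat \<Rightarrow> 'a::t2_space"
  assumes p: "ultrafilter_nat p" and q: "ultrafilter_nat q"
    and X: "compact X" and sX: "\<And>n. s n \<in> X"
  shows "ulim (uplus p q) s = ulim q (\<lambda>n. ulim (uplus_nat p n) s)"
proof -
  define y where "y n = ulim (uplus_nat p n) s" for n
  have yX: "y n \<in> X" and y: "is_ulim (uplus_nat p n) s (y n)" for n
    unfolding y_def by (rule ulim_in_is_ulim[OF ultrafilter_nat_uplus_nat[OF p] X], rule sX)+
  have "is_ulim q y (ulim q y)" by (rule ulim_in_is_ulim(2)[OF q X]) (rule yX)
  then have "is_ulim (uplus p q) s (ulim q y)" by (rule is_ulim_uplus[OF y _ q])
  then have "ulim (uplus p q) s = ulim q y" by (rule ulim_eqI[OF ultrafilter_nat_uplus[OF p q]])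
  then show ?thesis unfolding y_def .
qed

lemma fcomp_seq_in:
  assumes "\<And>n. n \<ge> 1 \<Longrightarrow> f n ` X \<subseteq> X" and "x \<in> X"
  shows "fcomp_seq f k x \<in> X"
  using assms by (induction k) auto

theorem lemma3p8:
  fixes X :: "'a::metric_space set" and f :: "nat \<Rightarrow> 'a \<Rightarrow> 'a"
    and p q :: "nat set set" and x :: 'a
  assumes "compact X"
    and "\<And>n. n \<ge> 1 \<Longrightarrow> continuous_on X (f n)"
    and "\<And>n. n \<ge> 1 \<Longrightarrow> f n ` X \<subseteq> X"
    and "free_ultrafilter_nat p" and "free_ultrafilter_nat q"
    and "x \<in> X"
  shows "fcomp_ulim f (uplus p q) x = ulim q (\<lambda>n. fcomp_ulim f (uplus_nat p n) x)"
proof -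
  have "ultrafilter_nat p" and "ultrafilter_nat q"
    using assms(4,5) unfolding free_ultrafilter_nat_def by auto
  then show ?thesis
    unfolding fcomp_ulim_def
  proof (rule ulim_uplus[OF _ _ \<open>compact X\<close>])
    show "fcomp_seq f k x \<in> X" for k by (rule fcomp_seq_in[OF assms(3,6)])
  qed
qed

end
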